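(* Let $\mathscr{H}$ be a complex Hilbert space, let $\mathscr{A}$ be a $C^*$-algebra with $\mathbb{K}(\mathscr{H})\subseteq\mathscr{A}\subseteq\mathbb{B}(\mathscr{H})$, let $\mathscr{E},\mathscr{F}$ be inner product $\mathscr{A}$-modules and let $T:\mathscr{E}\to\mathscr{F}$ be an $\mathscr{A}$-linear mapping. Suppose that for some minimal projection $e$ in $\mathscr{A}$ the restriction $T_e=T|_{\mathscr{E}_e}:\mathscr{E}_e\to\mathscr{F}_e$ satisfies $0<[T_e]\leq\|T_e\|<\infty$. Then (i) $[T]=[T_e]$ and (ii) $\|T\|=\|T_e\|$.
   Context: An inner product $\mathscr{A}$-module is a right $\mathscr{A}$-module with an $\mathscr{A}$-valued inner product $\langle\cdot,\cdot\rangle$ ($\mathbb{C}$-linear and $\mathscr{A}$-linear in the second variable, $\langle x,y\rangle^*=\langle y,x\rangle$, $\langle x,x\rangle\geq0$ with equality iff $x=0$), with norm $\|x\|=\|\langle x,x\rangle\|^{1/2}$. A map is $\mathscr{A}$-linear if it is linear and $T(xa)=(Tx)a$. Minimal projections in $\mathscr{A}$ are the rank-one projections $e=\eta\otimes\eta$, $\|\eta\|=1$, where $(\eta\otimes\zeta)\xi=(\xi,\zeta)\eta$. $\mathscr{E}_e=\{xe:x\in\mathscr{E}\}$ is an inner product space with $(x,y)=\mathrm{tr}\langle x,y\rangle$, whose norm coincides with the module norm; $T$ maps $\mathscr{E}_e$ into $\mathscr{F}_e$ by $\mathscr{A}$-linearity. The minimum modulus is $[T]=\inf\{\|Tx\|:\|x\|=1\}$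 (and similarly $[T_e]$ with $x\in\mathscr{E}_e$). *)

theory Defs
  imports "HOL-Analysis.Analysis"
begin

class cvec = ab_group_add +
  fixes scaleC :: "complex \<Rightarrow> 'a \<Rightarrow> 'a"
  assumes scaleC_add_right: "scaleC c (x + y) = scaleC c x + scaleC c y"
    and scaleC_add_left: "scaleC (c + d) x = scaleC c x + scaleC d x"
    and scaleC_scaleC: "scaleC c (scaleC d x) = scaleC (c * d) x"
    and scaleC_one: "scaleC 1 x = x"

class chilbert = cvec +
  fixes cinner :: "'a \<Rightarrow> 'a \<Rightarrow> complex"
  assumes cinner_add_right: "cinner x (y + z) = cinner x y + cinner x z"
    and cinner_scaleC_right: "cinner x (scaleC c y) = c * cinner x y"
    and cinner_commute: "cinner y x = cnj (cinner x y)"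
    and cinner_nonneg: "0 \<le> Re (cinner x x)"
    and cinner_eq_zero: "cinner x x = 0 \<Longrightarrow> x = 0"
    and cinner_complete:
      "(\<forall>\<epsilon>>0. \<exists>N. \<forall>m\<ge>N. \<forall>n\<ge>N. sqrt (Re (cinner (X m - X n) (X m - X n))) < \<epsilon>)
       \<Longrightarrow> \<exists>L. (\<lambda>n. sqrt (Re (cinner (X n - L) (X n - L)))) \<longlonglongrightarrow> 0"

definition hnorm :: "'h::chilbert \<Rightarrow> real" where
  "hnorm x = sqrt (Re (cinner x x))"

definition bounded_op :: "('h::chilbert \<Rightarrow> 'h) \<Rightarrow> bool" where
  "bounded_op a \<longleftrightarrow> (\<forall>x y. a (x + y) = a x + a y) \<and> (\<forall>c x. a (scaleC c x) = scaleC c (a x))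
     \<and> (\<exists>K. \<forall>x. hnorm (a x) \<le> K * hnorm x)"

definition opnorm :: "('h::chilbert \<Rightarrow> 'h) \<Rightarrow> real" where
  "opnorm a = Sup {hnorm (a x) | x. hnorm x \<le> 1}"

text \<open>Compact operator: the image of the closed unit ball is totally bounded
  (equivalently relatively compact, H being complete).\<close>
definition compact_op :: "('h::chilbert \<Rightarrow> 'h) \<Rightarrow> bool" where
  "compact_op a \<longleftrightarrow> bounded_op a \<and>
     (\<forall>\<epsilon>>0. \<exists>F. finite F \<and> (\<forall>x. hnorm x \<le> 1 \<longrightarrow> (\<exists>y\<in>F. hnorm (a x - y) < \<epsilon>)))"

definition is_adjoint :: "('h::chilbert \<Rightarrow> 'h) \<Rightarrow> ('h \<Rightarrow> 'h) \<Rightarrow> bool" where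
  "is_adjoint a b \<longleftrightarrow> (\<forall>x y. cinner (a x) y = cinner x (b y))"

definition op_add :: "('h::chilbert \<Rightarrow> 'h) \<Rightarrow> ('h \<Rightarrow> 'h) \<Rightarrow> ('h \<Rightarrow> 'h)" where
  "op_add a b = (\<lambda>x. a x + b x)"

definition op_scale :: "complex \<Rightarrow> ('h::chilbert \<Rightarrow> 'h) \<Rightarrow> ('h \<Rightarrow> 'h)" where
  "op_scale c a = (\<lambda>x. scaleC c (a x))"

definition cstar_alg :: "('h::chilbert \<Rightarrow> 'h) set \<Rightarrow> bool" where
  "cstar_alg A \<longleftrightarrow> A \<subseteq> {a. bounded_op a}
     \<and> (\<forall>a\<in>A. \<forall>b\<in>A. op_add a b \<in> A \<and> a \<circ> b \<in> A)
     \<and> (\<forall>c. \<forall>a\<in>A. op_scale c a \<in> A)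
     \<and> (\<forall>a\<in>A. \<exists>b\<in>A. is_adjoint a b)
     \<and> (\<forall>X L. (\<forall>n. X n \<in> A) \<and> bounded_op L \<and> (\<lambda>n. opnorm (\<lambda>x. X n x - L x)) \<longlonglongrightarrow> 0
              \<longrightarrow> L \<in> A)"

definition rank_one :: "'h::chilbert \<Rightarrow> ('h \<Rightarrow> 'h)" where
  "rank_one \<eta> = (\<lambda>\<xi>. scaleC (cinner \<eta> \<xi>) \<eta>)"

text \<open>Minimal projections in A (K(H) \<subseteq> A): the rank-one projections \<eta>\<otimes>\<eta>, \<parallel>\<eta>\<parallel> = 1.\<close>
definition minimal_projection :: "('h::chilbert \<Rightarrow> 'h) set \<Rightarrow> ('h \<Rightarrow> 'h) \<Rightarrow> bool" where
  "minimal_projection A e \<longleftrightarrow> e \<in> A \<and> (\<exists>\<eta>. hnorm \<eta> = 1 \<and> e = rank_one \<eta>)"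

text \<open>act: right action of A on E; ip: the A-valued inner product.\<close>
definition ip_module ::
  "('h::chilbert \<Rightarrow> 'h) set \<Rightarrow> ('e::cvec \<Rightarrow> ('h \<Rightarrow> 'h) \<Rightarrow> 'e) \<Rightarrow> ('e \<Rightarrow> 'e \<Rightarrow> ('h \<Rightarrow> 'h)) \<Rightarrow> bool" where
  "ip_module A act ip \<longleftrightarrow>
     (\<forall>x y a. a \<in> A \<longrightarrow> act (x + y) a = act x a + act y a)
   \<and> (\<forall>x a b. a \<in> A \<longrightarrow> b \<in> A \<longrightarrow> act x (op_add a b) = act x a + act x b)
   \<and> (\<forall>x a b. a \<in> A \<longrightarrow> b \<in> A \<longrightarrow> act (act x a) b = act x (a \<circ> b))
   \<and> (\<forall>x a c. a \<in> A \<longrightarrow> scaleC c (act x a) = act (scaleC c x) a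
                        \<and> scaleC c (act x a) = act x (op_scale c a))
   \<and> (\<forall>x y. ip x y \<in> A)
   \<and> (\<forall>x y z. ip x (y + z) = op_add (ip x y) (ip x z))
   \<and> (\<forall>x y c. ip x (scaleC c y) = op_scale c (ip x y))
   \<and> (\<forall>x y a. a \<in> A \<longrightarrow> ip x (act y a) = ip x y \<circ> a)
   \<and> (\<forall>x y. is_adjoint (ip x y) (ip y x))
   \<and> (\<forall>x \<xi>. 0 \<le> Re (cinner \<xi> (ip x x \<xi>)))
   \<and> (\<forall>x. ip x x = (\<lambda>_. 0) \<longleftrightarrow> x = 0)"

definition mnorm :: "('e \<Rightarrow> 'e \<Rightarrow> ('h::chilbert \<Rightarrow> 'h)) \<Rightarrow> 'e \<Rightarrow> real" where
  "mnorm ip x = sqrt (opnorm (ip x x))"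

definition A_linear ::
  "('h::chilbert \<Rightarrow> 'h) set \<Rightarrow> ('e::cvec \<Rightarrow> ('h \<Rightarrow> 'h) \<Rightarrow> 'e) \<Rightarrow> ('f::cvec \<Rightarrow> ('h \<Rightarrow> 'h) \<Rightarrow> 'f)
     \<Rightarrow> ('e \<Rightarrow> 'f) \<Rightarrow> bool" where
  "A_linear A actE actF T \<longleftrightarrow> (\<forall>x y. T (x + y) = T x + T y) \<and> (\<forall>c x. T (scaleC c x) = scaleC c (T x))
     \<and> (\<forall>x a. a \<in> A \<longrightarrow> T (actE x a) = actF (T x) a)"

definition op_norm_on :: "('e \<Rightarrow> 'e \<Rightarrow> ('h::chilbert \<Rightarrow> 'h)) \<Rightarrow> ('f \<Rightarrow> 'f \<Rightarrow> ('h \<Rightarrow> 'h))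
     \<Rightarrow> ('e \<Rightarrow> 'f) \<Rightarrow> 'e set \<Rightarrow> ereal" where
  "op_norm_on ipE ipF T S = Sup ((\<lambda>x. ereal (mnorm ipF (T x))) ` {x\<in>S. mnorm ipE x = 1})"

definition min_mod_on :: "('e \<Rightarrow> 'e \<Rightarrow> ('h::chilbert \<Rightarrow> 'h)) \<Rightarrow> ('f \<Rightarrow> 'f \<Rightarrow> ('h \<Rightarrow> 'h))
     \<Rightarrow> ('e \<Rightarrow> 'f) \<Rightarrow> 'e set \<Rightarrow> ereal" where
  "min_mod_on ipE ipF T S = Inf ((\<lambda>x. ereal (mnorm ipF (T x))) ` {x\<in>S. mnorm ipE x = 1})"

end

theory Submission
  imports Defs
begin

text \<open>Write e = \<eta> \<otimes> \<eta>. For x \<in> E and \<xi> \<in> H the vector w = x(\<xi> \<otimes> \<eta>) lies in E_e and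
  <w,w> = (<x,x>\<xi>,\<xi>) e, so \<parallel>w\<parallel>^2 = (<x,x>\<xi>,\<xi>); likewise \<parallel>Tw\<parallel>^2 = (<Tx,Tx>\<xi>,\<xi>) by
  A-linearity. The bounds [T_e] \<le> \<parallel>Tw\<parallel>/\<parallel>w\<parallel> \<le> \<parallel>T_e\<parallel> therefore say that
  [T_e]^2 <x,x> \<le> <Tx,Tx> \<le> \<parallel>T_e\<parallel>^2 <x,x> as positive operators on H, and comparing
  operator norms gives [T_e] \<parallel>x\<parallel> \<le> \<parallel>Tx\<parallel> \<le> \<parallel>T_e\<parallel> \<parallel>x\<parallel> for every x \<in> E.\<close>

lemma scaleC_zero_left [simp]: "scaleC 0 (x::'a::cvec) = 0"
proof -
  have "scaleC 0 x = scaleC 0 x + scaleC 0 x" using scaleC_add_left[of 0 0 x] by simp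
  then show ?thesis by simp
qed

lemma scaleC_minus_left: "scaleC (- c) (x::'a::cvec) = - scaleC c x"
proof -
  have "scaleC c x + scaleC (-c) x = 0" using scaleC_add_left[of c "-c" x] by simp
  then show ?thesis by (simp add: eq_neg_iff_add_eq_0 add.commute)
qed

lemma scaleC_diff_left: "scaleC (c - d) (x::'a::cvec) = scaleC c x - scaleC d x"
  by (simp only: diff_conv_add_uminus scaleC_add_left scaleC_minus_left)

lemma cinner_add_left: "cinner ((x::'a::chilbert) + y) z = cinner x z + cinner y z"
  by (metis cinner_commute cinner_add_right complex_cnj_add)

lemma cinner_scaleC_left: "cinner (scaleC c (x::'a::chilbert)) y = cnj c * cinner x y"
  by (metis cinner_commute cinner_scaleC_right complex_cnj_mult complex_cnj_cnj)

lemma cinner_zero_right [simp]: "cinner (x::'a::chilbert) 0 = 0"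
  using cinner_scaleC_right[of x 0 x] by simp

lemma cinner_zero_left [simp]: "cinner 0 (x::'a::chilbert) = 0"
  using cinner_scaleC_left[of 0 x x] by simp

lemma cinner_minus_right: "cinner (x::'a::chilbert) (- y) = - cinner x y"
  using cinner_scaleC_right[of x "-1" y] scaleC_minus_left[of 1 y] by (simp add: scaleC_one)

lemma cinner_minus_left: "cinner (- (x::'a::chilbert)) y = - cinner x y"
  by (metis cinner_commute cinner_minus_right complex_cnj_minus)

lemma cinner_diff_right: "cinner (x::'a::chilbert) (y - z) = cinner x y - cinner x z"
  by (simp only: diff_conv_add_uminus cinner_add_right cinner_minus_right)

lemma cinner_diff_left: "cinner ((x::'a::chilbert) - y) z = cinner x z - cinner y z"
  by (simp only: diff_conv_add_uminus cinner_add_left cinner_minus_left)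

lemma Re_cinner_commute: "Re (cinner (y::'a::chilbert) x) = Re (cinner x y)"
  by (subst cinner_commute) simp

lemma cinner_self_real: "cinner (x::'a::chilbert) x = complex_of_real (Re (cinner x x))"
  using cinner_commute[of x x] by (simp add: complex_eq_iff)

lemma hnorm_sq: "(hnorm (x::'a::chilbert))\<^sup>2 = Re (cinner x x)"
  by (simp add: hnorm_def cinner_nonneg)

lemma hnorm_nonneg: "0 \<le> hnorm (x::'a::chilbert)"
  by (simp add: hnorm_def cinner_nonneg)

lemma hnorm_zero [simp]: "hnorm (0::'a::chilbert) = 0"
  by (simp add: hnorm_def)

lemma hnorm_eq_0: "hnorm (x::'a::chilbert) = 0 \<longleftrightarrow> x = 0"
proof
  assume "hnorm x = 0"
  then have "Re (cinner x x) = 0" using hnorm_sq[of x] by simp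
  then have "cinner x x = 0" using cinner_self_real[of x] by (metis of_real_0)
  then show "x = 0" by (rule cinner_eq_zero)
qed simp

lemma hnorm_pos: "(x::'a::chilbert) \<noteq> 0 \<Longrightarrow> 0 < hnorm x"
  using hnorm_eq_0[of x] hnorm_nonneg[of x] by linarith

lemma hnorm_scaleC: "hnorm (scaleC c (x::'a::chilbert)) = cmod c * hnorm x"
proof -
  have "cinner (scaleC c x) (scaleC c x) = (cnj c * c) * cinner x x"
    by (simp add: cinner_scaleC_left cinner_scaleC_right)
  also have "cnj c * c = complex_of_real ((cmod c)\<^sup>2)"
    by (metis complex_norm_square mult.commute)
  finally show ?thesis by (simp add: hnorm_def real_sqrt_mult)
qed

lemma cinner_self_eq_1: "hnorm (\<eta>::'a::chilbert) = 1 \<Longrightarrow> cinner \<eta> \<eta> = 1"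
  using hnorm_sq[of \<eta>] cinner_self_real[of \<eta>] by (metis of_real_1 power_one)

lemma hnorm_parallelogram:
  "(hnorm ((u::'a::chilbert) + v))\<^sup>2 + (hnorm (u - v))\<^sup>2 = 2 * (hnorm u)\<^sup>2 + 2 * (hnorm v)\<^sup>2"
  unfolding hnorm_sq using Re_cinner_commute[of u v]
  by (simp add: cinner_add_left cinner_add_right cinner_diff_left cinner_diff_right)

lemma cmod_cinner_le: "cmod (cinner (x::'a::chilbert) y) \<le> hnorm x * hnorm y"
proof (cases "cinner x y = 0")
  case True
  then show ?thesis by (simp add: hnorm_nonneg)
next
  case False
  define c where "c = cinner x y"
  define p where "p = cnj c / complex_of_real (cmod c)"
  have "p * c = (c * cnj c) / complex_of_real (cmod c)" by (simp add: p_def mult.commute)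
  also have "\<dots> = complex_of_real ((cmod c)\<^sup>2 / cmod c)"
    by (simp only: complex_norm_square[symmetric] of_real_divide)
  finally have pc: "p * c = complex_of_real (cmod c)" by (simp add: power2_eq_square)
  have cp: "cmod p = 1" using False by (simp add: p_def c_def norm_divide)
  define w where "w = scaleC (complex_of_real (hnorm y)) x"
  define z where "z = scaleC (complex_of_real (hnorm x) * p) y"
  have "cinner w z = complex_of_real (hnorm y * hnorm x) * (p * c)"
    by (simp add: w_def z_def cinner_scaleC_left cinner_scaleC_right c_def mult_ac)
  then have wz: "Re (cinner w z) = hnorm y * hnorm x * cmod c" using pc by simp
  have ww: "(hnorm w)\<^sup>2 = (hnorm x * hnorm y)\<^sup>2" and zz: "(hnorm z)\<^sup>2 = (hnorm x * hnorm y)\<^sup>2"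
    by (simp_all add: w_def z_def hnorm_scaleC hnorm_nonneg norm_mult cp mult.commute)
  have "0 \<le> (hnorm (w - z))\<^sup>2" by simp
  also have "\<dots> = (hnorm w)\<^sup>2 + (hnorm z)\<^sup>2 - 2 * Re (cinner w z)"
    unfolding hnorm_sq using Re_cinner_commute[of w z]
    by (simp add: cinner_diff_left cinner_diff_right)
  finally have "hnorm x * hnorm y * cmod c \<le> hnorm x * hnorm y * (hnorm x * hnorm y)"
    unfolding ww zz wz by (simp add: power2_eq_square mult_ac)
  moreover have "0 < hnorm x * hnorm y"
    using False hnorm_pos[of x] hnorm_pos[of y] by (fastforce simp: c_def)
  ultimately show ?thesis unfolding c_def using mult_le_cancel_left_pos by blast
qed

definition qform :: "('h::chilbert \<Rightarrow> 'h) \<Rightarrow> 'h \<Rightarrow> real" where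
  "qform a \<xi> = Re (cinner \<xi> (a \<xi>))"

lemma bounded_op_add: "bounded_op a \<Longrightarrow> a (x + y) = a x + a y"
  by (simp add: bounded_op_def)

lemma bounded_op_scaleC: "bounded_op a \<Longrightarrow> a (scaleC c x) = scaleC c (a x)"
  by (simp add: bounded_op_def)

lemma bounded_op_zero: "bounded_op a \<Longrightarrow> a 0 = 0"
  using bounded_op_add[of a 0 0] by simp

lemma bounded_op_diff: "bounded_op a \<Longrightarrow> a (x - y) = a x - a y"
  using bounded_op_add[of a "x - y" y] by (simp add: eq_diff_eq)

lemma bdd_above_opnorm: "bounded_op a \<Longrightarrow> bdd_above {hnorm (a x) |x. hnorm x \<le> 1}"
proof -
  assume "bounded_op a"
  then obtain K where K: "\<And>x. hnorm (a x) \<le> K * hnorm x" by (auto simp: bounded_op_def)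
  have "hnorm (a x) \<le> \<bar>K\<bar>" if "hnorm x \<le> 1" for x
  proof -
    have "hnorm (a x) \<le> \<bar>K\<bar> * hnorm x"
      using K[of x] by (meson abs_ge_self hnorm_nonneg mult_right_mono order_trans)
    also have "\<dots> \<le> \<bar>K\<bar>" using that hnorm_nonneg[of x] by (simp add: mult_left_le)
    finally show ?thesis .
  qed
  then show ?thesis by (intro bdd_aboveI[where M="\<bar>K\<bar>"]) auto
qed

lemma opnorm_upper: "bounded_op a \<Longrightarrow> hnorm x \<le> 1 \<Longrightarrow> hnorm (a x) \<le> opnorm a"
  unfolding opnorm_def by (rule cSup_upper) (auto intro: bdd_above_opnorm)

lemma opnorm_nonneg: "bounded_op a \<Longrightarrow> 0 \<le> opnorm a"
  using opnorm_upper[of a 0] by (simp add: bounded_op_zero)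

lemma opnorm_le: "(\<And>x. hnorm x \<le> 1 \<Longrightarrow> hnorm (a x) \<le> c) \<Longrightarrow> opnorm a \<le> c"
  unfolding opnorm_def by (rule cSup_least) (auto intro: exI[of _ 0])

lemma hnorm_le_opnorm:
  assumes b: "bounded_op a"
  shows "hnorm (a x) \<le> opnorm a * hnorm x"
proof (cases "x = 0")
  case True
  then show ?thesis using b by (simp add: bounded_op_zero)
next
  case False
  have h: "hnorm x > 0" using False by (rule hnorm_pos)
  define x' where "x' = scaleC (complex_of_real (1 / hnorm x)) x"
  have "hnorm x' = 1" using h by (simp add: x'_def hnorm_scaleC norm_divide)
  then have "hnorm (a x') \<le> opnorm a" by (intro opnorm_upper[OF b]) simp
  moreover have "hnorm (a x') = hnorm (a x) / hnorm x"
    using h by (simp add: x'_def bounded_op_scaleC[OF b] hnorm_scaleC norm_divide)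
  ultimately show ?thesis using h by (simp add: divide_le_eq)
qed

lemma opnorm_eq_0_iff: "bounded_op a \<Longrightarrow> opnorm a = 0 \<longleftrightarrow> a = (\<lambda>_. 0)"
proof
  assume b: "bounded_op a" and "opnorm a = 0"
  then have "hnorm (a x) = 0" for x using hnorm_le_opnorm[OF b, of x] hnorm_nonneg[of "a x"] by simp
  then show "a = (\<lambda>_. 0)" by (simp add: hnorm_eq_0 fun_eq_iff)
next
  assume b: "bounded_op a" and "a = (\<lambda>_. 0)"
  then show "opnorm a = 0" using opnorm_nonneg[OF b] opnorm_le[of a 0] by simp
qed

lemma qform_le_opnorm: "bounded_op a \<Longrightarrow> qform a \<xi> \<le> opnorm a * (hnorm \<xi>)\<^sup>2"
proof -
  assume b: "bounded_op a"
  have "qform a \<xi> \<le> cmod (cinner \<xi> (a \<xi>))" unfolding qform_def by (rule complex_Re_le_cmod)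
  also have "\<dots> \<le> hnorm \<xi> * hnorm (a \<xi>)" by (rule cmod_cinner_le)
  also have "\<dots> \<le> hnorm \<xi> * (opnorm a * hnorm \<xi>)"
    by (rule mult_left_mono[OF hnorm_le_opnorm[OF b] hnorm_nonneg])
  finally show ?thesis by (simp add: power2_eq_square mult_ac)
qed

lemma qform_scaleC_real:
  "bounded_op a \<Longrightarrow> qform a (scaleC (complex_of_real t) \<xi>) = t\<^sup>2 * qform a \<xi>"
  by (simp add: qform_def bounded_op_scaleC cinner_scaleC_left cinner_scaleC_right power2_eq_square)

lemma cinner_selfadjoint_real:
  "is_adjoint a a \<Longrightarrow> cinner \<xi> (a \<xi>) = complex_of_real (qform a \<xi>)"
  using cinner_commute[of \<xi> "a \<xi>"] by (simp add: is_adjoint_def qform_def complex_eq_iff)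

lemma qform_polarization:
  assumes "bounded_op b" and "is_adjoint b b"
  shows "qform b (u + v) - qform b (u - v) = 4 * Re (cinner u (b v))"
proof -
  have "Re (cinner v (b u)) = Re (cinner u (b v))"
    using assms(2) Re_cinner_commute[of u "b v"] by (simp add: is_adjoint_def)
  then show ?thesis
    using assms(1) by (simp add: qform_def bounded_op_add bounded_op_diff cinner_add_left
        cinner_add_right cinner_diff_left cinner_diff_right)
qed

text \<open>Polarization with u = b v / \<parallel>b v\<parallel> gives 4 \<parallel>b v\<parallel> \<le> qform b (u + v), and the
  parallelogram law gives \<parallel>u + v\<parallel> \<le> 2 for \<parallel>v\<parallel> \<le> 1.\<close>
lemma opnorm_le_of_qform_le:
  fixes a b :: "'h::chilbert \<Rightarrow> 'h"
  assumes a: "bounded_op a" and b: "bounded_op b" and adj: "is_adjoint b b"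
    and pos: "\<And>\<xi>. 0 \<le> qform b \<xi>" and K: "0 \<le> K"
    and le: "\<And>\<xi>. qform b \<xi> \<le> K * qform a \<xi>"
  shows "opnorm b \<le> K * opnorm a"
proof (rule opnorm_le)
  fix v :: 'h assume v: "hnorm v \<le> 1"
  show "hnorm (b v) \<le> K * opnorm a"
  proof (cases "b v = 0")
    case True
    then show ?thesis using K opnorm_nonneg[OF a] by simp
  next
    case False
    define h where "h = hnorm (b v)"
    have h: "h > 0" using False by (simp add: h_def hnorm_pos)
    define u where "u = scaleC (complex_of_real (1 / h)) (b v)"
    have hu: "hnorm u = 1" using h by (simp add: u_def hnorm_scaleC h_def norm_divide)
    have "Re (cinner (b v) (b v)) = h * h" using hnorm_sq[of "b v"] by (simp add: h_def power2_eq_square)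
    then have ub: "Re (cinner u (b v)) = h" using h by (simp add: u_def cinner_scaleC_left)
    have "(hnorm v)\<^sup>2 \<le> 1" using v hnorm_nonneg[of v] by (simp add: power_le_one)
    moreover have "(hnorm u)\<^sup>2 = 1" using hu by simp
    ultimately have "(hnorm (u + v))\<^sup>2 \<le> 4"
      using hnorm_parallelogram[of u v] zero_le_power2[of "hnorm (u - v)"] by linarith
    then have uv: "opnorm a * (hnorm (u + v))\<^sup>2 \<le> opnorm a * 4"
      by (rule mult_left_mono[OF _ opnorm_nonneg[OF a]])
    have "4 * h = qform b (u + v) - qform b (u - v)"
      using qform_polarization[OF b adj] ub by simp
    also have "\<dots> \<le> K * qform a (u + v)" using pos[of "u - v"] le[of "u + v"] by simp
    also have "\<dots> \<le> K * (opnorm a * 4)"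
      using mult_left_mono[OF order_trans[OF qform_le_opnorm[OF a] uv] K] .
    finally show ?thesis by (simp add: h_def)
  qed
qed

definition outer_op :: "'h::chilbert \<Rightarrow> 'h \<Rightarrow> 'h \<Rightarrow> 'h" where
  "outer_op \<xi> \<eta> = (\<lambda>\<zeta>. scaleC (cinner \<eta> \<zeta>) \<xi>)"

lemma hnorm_outer_op_le: "hnorm (outer_op \<xi> \<eta> \<zeta>) \<le> hnorm \<eta> * hnorm \<zeta> * hnorm \<xi>"
  unfolding outer_op_def hnorm_scaleC by (rule mult_right_mono[OF cmod_cinner_le hnorm_nonneg])

lemma bounded_op_outer_op: "bounded_op (outer_op \<xi> \<eta>)"
  unfolding bounded_op_def
proof (intro conjI allI)
  show "\<exists>K. \<forall>\<zeta>. hnorm (outer_op \<xi> \<eta> \<zeta>) \<le> K * hnorm \<zeta>"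
    using hnorm_outer_op_le by (metis mult.commute mult.left_commute)
qed (simp_all add: outer_op_def cinner_add_right scaleC_add_left cinner_scaleC_right scaleC_scaleC)

text \<open>The unit ball is mapped into the compact, hence totally bounded, set of
  multiples c \<xi> with |c| \<le> \<parallel>\<eta>\<parallel>.\<close>
lemma compact_op_outer_op: "compact_op (outer_op \<xi> \<eta>)"
  unfolding compact_op_def
proof (intro conjI allI impI bounded_op_outer_op)
  fix \<epsilon> :: real assume "\<epsilon> > 0"
  define \<delta> where "\<delta> = \<epsilon> / (hnorm \<xi> + 1)"
  have \<delta>: "\<delta> > 0" using \<open>\<epsilon> > 0\<close> hnorm_nonneg[of \<xi>] by (simp add: \<delta>_def)
  have "seq_compact (cball (0::complex) (hnorm \<eta>))" by (simp add: compact_imp_seq_compact)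
  from seq_compact_imp_totally_bounded[OF this] \<delta> obtain k where
    k: "finite k" "cball (0::complex) (hnorm \<eta>) \<subseteq> (\<Union>c\<in>k. ball c \<delta>)" by blast
  have "\<exists>y\<in>(\<lambda>c. scaleC c \<xi>) ` k. hnorm (outer_op \<xi> \<eta> \<zeta> - y) < \<epsilon>" if "hnorm \<zeta> \<le> 1" for \<zeta>
  proof -
    define c where "c = cinner \<eta> \<zeta>"
    have "cmod c \<le> hnorm \<eta>"
      using cmod_cinner_le[of \<eta> \<zeta>] that hnorm_nonneg[of \<eta>] unfolding c_def
      by (meson mult_left_le order_trans hnorm_nonneg)
    with k obtain c0 where c0: "c0 \<in> k" "cmod (c - c0) < \<delta>"
      by (fastforce simp: dist_norm norm_minus_commute)
    have "hnorm (outer_op \<xi> \<eta> \<zeta> - scaleC c0 \<xi>) = cmod (c - c0) * hnorm \<xi>"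
      by (simp add: outer_op_def c_def scaleC_diff_left[symmetric] hnorm_scaleC)
    also have "\<dots> \<le> \<delta> * hnorm \<xi>" using c0(2) by (simp add: mult_right_mono hnorm_nonneg)
    also have "\<dots> < \<epsilon>"
      using \<delta> hnorm_nonneg[of \<xi>] by (simp add: \<delta>_def field_simps)
    finally show ?thesis using c0(1) by blast
  qed
  then show "\<exists>F. finite F \<and> (\<forall>\<zeta>. hnorm \<zeta> \<le> 1 \<longrightarrow> (\<exists>y\<in>F. hnorm (outer_op \<xi> \<eta> \<zeta> - y) < \<epsilon>))"
    using k(1) by blast
qed

lemma outer_op_comp_rank_one: "hnorm \<eta> = 1 \<Longrightarrow> outer_op \<xi> \<eta> \<circ> rank_one \<eta> = outer_op \<xi> \<eta>"
  by (simp add: fun_eq_iff outer_op_def rank_one_def cinner_scaleC_right cinner_self_eq_1)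

lemma opnorm_scaled_rank_one:
  assumes \<eta>: "hnorm \<eta> = 1" and q: "0 \<le> q"
  shows "opnorm (op_scale (complex_of_real q) (rank_one \<eta>)) = q"
proof (rule antisym)
  have hn: "hnorm (op_scale (complex_of_real q) (rank_one \<eta>) \<zeta>) = q * cmod (cinner \<eta> \<zeta>)" for \<zeta>
    using \<eta> q by (simp add: op_scale_def rank_one_def hnorm_scaleC)
  have "hnorm (op_scale (complex_of_real q) (rank_one \<eta>) \<zeta>) \<le> q" if "hnorm \<zeta> \<le> 1" for \<zeta>
  proof -
    have "cmod (cinner \<eta> \<zeta>) \<le> 1" using cmod_cinner_le[of \<eta> \<zeta>] \<eta> that by simp
    then show ?thesis using hn[of \<zeta>] q by (simp add: mult_left_le)
  qed
  then show "opnorm (op_scale (complex_of_real q) (rank_one \<eta>)) \<le> q" by (rule opnorm_le)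
  have "op_scale (complex_of_real q) (rank_one \<eta>) = outer_op (scaleC (complex_of_real q) \<eta>) \<eta>"
    by (simp add: fun_eq_iff op_scale_def rank_one_def outer_op_def scaleC_scaleC mult.commute)
  then show "q \<le> opnorm (op_scale (complex_of_real q) (rank_one \<eta>))"
    using opnorm_upper[OF bounded_op_outer_op, of \<eta> "scaleC (complex_of_real q) \<eta>" \<eta>] hn[of \<eta>] \<eta> by (simp add: cinner_self_eq_1)
qed

lemma is_adjoint_unique: "is_adjoint a b \<Longrightarrow> is_adjoint a b' \<Longrightarrow> b = b'"
proof (rule ext)
  fix y
  assume "is_adjoint a b" "is_adjoint a b'"
  then have "cinner (b y - b' y) (b y - b' y) = 0" by (simp add: is_adjoint_def cinner_diff_right)
  then show "b y = b' y" using cinner_eq_zero by fastforce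
qed

lemma is_adjoint_comp: "is_adjoint a a' \<Longrightarrow> is_adjoint b b' \<Longrightarrow> is_adjoint (a \<circ> b) (b' \<circ> a')"
  by (simp add: is_adjoint_def)

lemma is_adjoint_outer_op: "is_adjoint (outer_op \<xi> \<eta>) (outer_op \<eta> \<xi>)"
  unfolding is_adjoint_def outer_op_def
  by (metis cinner_commute cinner_scaleC_left cinner_scaleC_right mult.commute)

lemma ip_module_act_act:
  "ip_module A act ip \<Longrightarrow> a \<in> A \<Longrightarrow> b \<in> A \<Longrightarrow> act (act x a) b = act x (a \<circ> b)"
  by (simp add: ip_module_def)

lemma ip_module_ip_act: "ip_module A act ip \<Longrightarrow> a \<in> A \<Longrightarrow> ip x (act y a) = ip x y \<circ> a"
  by (simp add: ip_module_def)

lemma ip_module_is_adjoint: "ip_module A act ip \<Longrightarrow> is_adjoint (ip x y) (ip y x)"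
  by (simp add: ip_module_def)

lemma ip_module_qform_nonneg: "ip_module A act ip \<Longrightarrow> 0 \<le> qform (ip x x) \<xi>"
  by (simp add: ip_module_def qform_def)

lemma ip_module_bounded_op:
  "ip_module A act ip \<Longrightarrow> A \<subseteq> {a. bounded_op a} \<Longrightarrow> bounded_op (ip x y)"
  unfolding ip_module_def by (metis mem_Collect_eq subsetD)

lemma ip_act_outer_op:
  assumes M: "ip_module A act ip" and u: "outer_op \<xi> \<eta> \<in> A" and b: "bounded_op (ip x x)"
  shows "ip (act x (outer_op \<xi> \<eta>)) (act x (outer_op \<xi> \<eta>))
       = op_scale (complex_of_real (qform (ip x x) \<xi>)) (rank_one \<eta>)"
proof -
  let ?u = "outer_op \<xi> \<eta>" and ?w = "act x (outer_op \<xi> \<eta>)" and ?a = "ip x x"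
  have adj: "is_adjoint ?a ?a" and adj_w: "is_adjoint (ip x ?w) (ip ?w x)"
    using ip_module_is_adjoint[OF M] by blast+
  have "ip x ?w = ?a \<circ> ?u" using ip_module_ip_act[OF M u] .
  then have "is_adjoint (ip x ?w) (outer_op \<eta> \<xi> \<circ> ?a)"
    using is_adjoint_comp[OF adj is_adjoint_outer_op] by simp
  then have "ip ?w x = outer_op \<eta> \<xi> \<circ> ?a" using is_adjoint_unique adj_w by blast
  moreover have "ip ?w ?w = ip ?w x \<circ> ?u" using ip_module_ip_act[OF M u] .
  ultimately show ?thesis
    using cinner_selfadjoint_real[OF adj, of \<xi>]
    by (simp add: fun_eq_iff outer_op_def op_scale_def rank_one_def bounded_op_scaleC[OF b]
        cinner_scaleC_right scaleC_scaleC mult.commute)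
qed

lemma mnorm_act_outer_op:
  assumes M: "ip_module A act ip" and "outer_op \<xi> \<eta> \<in> A" and "bounded_op (ip x x)"
    and "hnorm \<eta> = 1"
  shows "mnorm ip (act x (outer_op \<xi> \<eta>)) = sqrt (qform (ip x x) \<xi>)"
  unfolding mnorm_def ip_act_outer_op[OF assms(1-3)]
  by (simp add: opnorm_scaled_rank_one assms(4) ip_module_qform_nonneg[OF M])

lemma act_outer_op_in_corner:
  assumes "ip_module A act ip" and "outer_op \<xi> \<eta> \<in> A" and "rank_one \<eta> \<in> A" and "hnorm \<eta> = 1"
  shows "act x (outer_op \<xi> \<eta>) \<in> range (\<lambda>y. act y (rank_one \<eta>))"
proof -
  have "act (act x (outer_op \<xi> \<eta>)) (rank_one \<eta>) = act x (outer_op \<xi> \<eta>)"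
    using ip_module_act_act[OF assms(1-3)] outer_op_comp_rank_one[OF assms(4)] by simp
  then show ?thesis by (metis rangeI)
qed

lemma mnorm_eq_0_iff:
  assumes "ip_module A act ip" and "bounded_op (ip x x)"
  shows "mnorm ip x = 0 \<longleftrightarrow> x = 0"
  using assms opnorm_eq_0_iff[OF assms(2)] opnorm_nonneg[OF assms(2)]
  by (simp add: mnorm_def ip_module_def)

lemma mnorm_le_of_qform_le:
  assumes ME: "ip_module A actE ipE" and MF: "ip_module A actF ipF" and B: "A \<subseteq> {a. bounded_op a}"
    and K: "0 \<le> K" and le: "\<And>\<xi>. qform (ipF y y) \<xi> \<le> K\<^sup>2 * qform (ipE x x) \<xi>"
  shows "mnorm ipF y \<le> K * mnorm ipE x"
proof -
  have "opnorm (ipF y y) \<le> K\<^sup>2 * opnorm (ipE x x)"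
    using ip_module_bounded_op[OF ME B] ip_module_bounded_op[OF MF B] ip_module_is_adjoint[OF MF]
      ip_module_qform_nonneg[OF MF] K le
    by (intro opnorm_le_of_qform_le) auto
  then have "sqrt (opnorm (ipF y y)) \<le> sqrt (K\<^sup>2) * sqrt (opnorm (ipE x x))"
    by (metis real_sqrt_le_mono real_sqrt_mult)
  then show ?thesis using K by (simp add: mnorm_def)
qed

lemma A_linear_zero: "A_linear A actE actF T \<Longrightarrow> T 0 = 0"
  unfolding A_linear_def by (metis add.right_neutral add_left_cancel)

lemma A_linear_act: "A_linear A actE actF T \<Longrightarrow> a \<in> A \<Longrightarrow> T (actE x a) = actF (T x) a"
  by (simp add: A_linear_def)

text \<open>The vectors x(t \<xi> \<otimes> \<eta>) lie in the corner E_e and have squared norm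
  t^2 qform (ipE x x) \<xi>; normalising them turns the corner bounds into form bounds.\<close>
lemma qform_bounds_of_corner_bounds:
  fixes A :: "('h::chilbert \<Rightarrow> 'h) set"
    and ipE :: "'e::cvec \<Rightarrow> 'e \<Rightarrow> ('h \<Rightarrow> 'h)" and ipF :: "'f::cvec \<Rightarrow> 'f \<Rightarrow> ('h \<Rightarrow> 'h)"
  assumes ME: "ip_module A actE ipE" and MF: "ip_module A actF ipF"
    and C: "{a. compact_op a} \<subseteq> A" and B: "A \<subseteq> {a. bounded_op a}"
    and L: "A_linear A actE actF T" and \<eta>: "hnorm \<eta> = 1" and m: "0 \<le> m"
    and corner: "\<And>w. w \<in> range (\<lambda>y. actE y (rank_one \<eta>)) \<Longrightarrow> mnorm ipE w = 1
                  \<Longrightarrow> m \<le> mnorm ipF (T w) \<and> mnorm ipF (T w) \<le> M"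
  shows "m\<^sup>2 * qform (ipE x x) \<xi> \<le> qform (ipF (T x) (T x)) \<xi>
       \<and> qform (ipF (T x) (T x)) \<xi> \<le> M\<^sup>2 * qform (ipE x x) \<xi>"
proof -
  define Q where "Q = qform (ipE x x) \<xi>"
  define R where "R = qform (ipF (T x) (T x)) \<xi>"
  have Q: "0 \<le> Q" unfolding Q_def by (rule ip_module_qform_nonneg[OF ME])
  have R: "0 \<le> R" unfolding R_def by (rule ip_module_qform_nonneg[OF MF])
  have uA: "outer_op \<zeta> \<eta> \<in> A" for \<zeta> using C compact_op_outer_op by blast
  have eA: "rank_one \<eta> \<in> A" using uA[of \<eta>] by (simp add: rank_one_def outer_op_def)
  define w where "w t = actE x (outer_op (scaleC (complex_of_real t) \<xi>) \<eta>)" for t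
  have w_corner: "w t \<in> range (\<lambda>y. actE y (rank_one \<eta>))" for t
    unfolding w_def by (rule act_outer_op_in_corner[OF ME uA eA \<eta>])
  have Tw: "T (w t) = actF (T x) (outer_op (scaleC (complex_of_real t) \<xi>) \<eta>)" for t
    unfolding w_def by (rule A_linear_act[OF L uA])
  have bE: "bounded_op (ipE x x)" and bF: "bounded_op (ipF (T x) (T x))"
    using ip_module_bounded_op ME MF B by blast+
  have nw: "mnorm ipE (w t) = \<bar>t\<bar> * sqrt Q" for t
    unfolding w_def mnorm_act_outer_op[OF ME uA bE \<eta>] qform_scaleC_real[OF bE] Q_def
    by (simp add: real_sqrt_mult)
  have nTw: "mnorm ipF (T (w t)) = \<bar>t\<bar> * sqrt R" for t
    unfolding Tw mnorm_act_outer_op[OF MF uA bF \<eta>] qform_scaleC_real[OF bF] R_def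
    by (simp add: real_sqrt_mult)
  show ?thesis
  proof (cases "Q = 0")
    case True
    have "w 1 = 0"
      using nw[of 1] True mnorm_eq_0_iff[OF ME ip_module_bounded_op[OF ME B]] by simp
    then have "mnorm ipF (T (w 1)) = 0"
      using A_linear_zero[OF L] mnorm_eq_0_iff[OF MF ip_module_bounded_op[OF MF B]] by simp
    then have "R = 0" using nTw[of 1] R by simp
    then show ?thesis using True by (simp add: Q_def R_def)
  next
    case False
    then have Q_pos: "0 < Q" using Q by simp
    define t where "t = 1 / sqrt Q"
    have "mnorm ipE (w t) = 1" using Q_pos by (simp add: nw t_def)
    moreover have "mnorm ipF (T (w t)) = sqrt (R / Q)"
      using Q_pos by (simp add: nTw t_def real_sqrt_divide)
    ultimately have bounds: "m \<le> sqrt (R / Q) \<and> sqrt (R / Q) \<le> M"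
      using corner[OF w_corner] by metis
    then have "m\<^sup>2 \<le> R / Q" and "R / Q \<le> M\<^sup>2"
      using power_mono[OF conjunct1[OF bounds] m, of 2] power_mono[OF conjunct2[OF bounds], of 2]
        Q R by simp_all
    then show ?thesis using Q_pos by (simp add: Q_def R_def pos_le_divide_eq pos_divide_le_eq)
  qed
qed

lemma min_mod_on_le:
  "w \<in> S \<Longrightarrow> mnorm ipE w = 1 \<Longrightarrow> min_mod_on ipE ipF T S \<le> ereal (mnorm ipF (T w))"
  unfolding min_mod_on_def by (rule INF_lower) simp

lemma op_norm_on_ge:
  "w \<in> S \<Longrightarrow> mnorm ipE w = 1 \<Longrightarrow> ereal (mnorm ipF (T w)) \<le> op_norm_on ipE ipF T S"
  unfolding op_norm_on_def by (rule SUP_upper) simp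

lemma min_mod_on_UNIV_eq:
  assumes "min_mod_on ipE ipF T S = ereal m" and "\<And>x. m * mnorm ipE x \<le> mnorm ipF (T x)"
  shows "min_mod_on ipE ipF T UNIV = min_mod_on ipE ipF T S"
proof (rule antisym)
  show "min_mod_on ipE ipF T UNIV \<le> min_mod_on ipE ipF T S"
    unfolding min_mod_on_def by (rule INF_superset_mono) auto
  show "min_mod_on ipE ipF T S \<le> min_mod_on ipE ipF T UNIV"
    unfolding assms(1) unfolding min_mod_on_def
  proof (rule INF_greatest)
    fix x assume "x \<in> {x \<in> UNIV. mnorm ipE x = 1}"
    then show "ereal m \<le> ereal (mnorm ipF (T x))" using assms(2)[of x] by simp
  qed
qed

lemma op_norm_on_UNIV_eq:
  assumes "op_norm_on ipE ipF T S = ereal M" and "\<And>x. mnorm ipF (T x) \<le> M * mnorm ipE x"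
  shows "op_norm_on ipE ipF T UNIV = op_norm_on ipE ipF T S"
proof (rule antisym)
  show "op_norm_on ipE ipF T S \<le> op_norm_on ipE ipF T UNIV"
    unfolding op_norm_on_def by (rule SUP_subset_mono) auto
  show "op_norm_on ipE ipF T UNIV \<le> op_norm_on ipE ipF T S"
    unfolding assms(1) unfolding op_norm_on_def
  proof (rule SUP_least)
    fix x assume "x \<in> {x \<in> UNIV. mnorm ipE x = 1}"
    then show "ereal (mnorm ipF (T x)) \<le> ereal M" using assms(2)[of x] by simp
  qed
qed

theorem proposition3p5:
  fixes A :: "('h::chilbert \<Rightarrow> 'h) set"
    and actE :: "'e::cvec \<Rightarrow> ('h \<Rightarrow> 'h) \<Rightarrow> 'e" and ipE :: "'e \<Rightarrow> 'e \<Rightarrow> ('h \<Rightarrow> 'h)"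
    and actF :: "'f::cvec \<Rightarrow> ('h \<Rightarrow> 'h) \<Rightarrow> 'f" and ipF :: "'f \<Rightarrow> 'f \<Rightarrow> ('h \<Rightarrow> 'h)"
    and T :: "'e \<Rightarrow> 'f" and e :: "'h \<Rightarrow> 'h"
  assumes "cstar_alg A"
    and "{a. compact_op a} \<subseteq> A" and "A \<subseteq> {a. bounded_op a}"
    and "ip_module A actE ipE" and "ip_module A actF ipF"
    and "A_linear A actE actF T"
    and "minimal_projection A e"
    and "0 < min_mod_on ipE ipF T (range (\<lambda>x. actE x e))"
    and "min_mod_on ipE ipF T (range (\<lambda>x. actE x e)) \<le> op_norm_on ipE ipF T (range (\<lambda>x. actE x e))"
    and "op_norm_on ipE ipF T (range (\<lambda>x. actE x e)) < \<infinity>"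
  shows "min_mod_on ipE ipF T UNIV = min_mod_on ipE ipF T (range (\<lambda>x. actE x e))
       \<and> op_norm_on ipE ipF T UNIV = op_norm_on ipE ipF T (range (\<lambda>x. actE x e))"
proof -
  from assms(7) obtain \<eta> where \<eta>: "hnorm \<eta> = 1" and e: "e = rank_one \<eta>"
    by (auto simp: minimal_projection_def)
  obtain m M where m: "min_mod_on ipE ipF T (range (\<lambda>x. actE x e)) = ereal m"
    and M: "op_norm_on ipE ipF T (range (\<lambda>x. actE x e)) = ereal M" and "0 < m" and "m \<le> M"
    using assms(8-10)
    by (cases "min_mod_on ipE ipF T (range (\<lambda>x. actE x e))";
        cases "op_norm_on ipE ipF T (range (\<lambda>x. actE x e))") auto
  have "m \<le> mnorm ipF (T w) \<and> mnorm ipF (T w) \<le> M"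
    if "w \<in> range (\<lambda>y. actE y (rank_one \<eta>))" "mnorm ipE w = 1" for w
    using min_mod_on_le[OF that, of ipF T] op_norm_on_ge[OF that, of ipF T] m M e by simp
  note qform_bounds =
    qform_bounds_of_corner_bounds[OF assms(4,5,2,3,6) \<eta> less_imp_le[OF \<open>0 < m\<close>] this]
  have "mnorm ipE x \<le> (1 / m) * mnorm ipF (T x)" for x
    using qform_bounds \<open>0 < m\<close>
    by (intro mnorm_le_of_qform_le[OF assms(5,4,3)]) (auto simp: field_simps)
  then have "m * mnorm ipE x \<le> mnorm ipF (T x)" for x
    using \<open>0 < m\<close> by (simp add: field_simps)
  moreover have "mnorm ipF (T x) \<le> M * mnorm ipE x" for x
    using qform_bounds \<open>0 < m\<close> \<open>m \<le> M\<close> by (intro mnorm_le_of_qform_le[OF assms(4,5,3)]) auto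
  ultimately show ?thesis
    using min_mod_on_UNIV_eq[OF m] op_norm_on_UNIV_eq[OF M] by blast
qed

end
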